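(* Let $G=(g_1,\dots,g_k)\in\mathbb{N}_0^k$ with $g_1>0$, $\gcd(G)=1$ and $c(G)=(c_2,\dots,c_k)$, and let $z_1=1$. Then $G$ is telescopic if and only if for each $i=2,\dots,k$ there exists $z_i\in\mathbb{N}_0$ such that $g_i=z_iC_{i,k}$, $\gcd(z_i,c_i)=1$, and $z_i\in\langle z_jC_{j,i-1} : 1\le j<i\rangle$.
   Context: $\langle A\rangle$ is the set of $\mathbb{N}_0$-linear combinations of the elements of $A$. $G_i=(g_1,\dots,g_i)$, $d_i=\gcd(G_i)$, $c_j=d_{j-1}/d_j$ for $2\le j\le k$; $G$ is telescopic if $c_jg_j\in\langle G_{j-1}\rangle$ for all $2\le j\le k$. $C_{m,n}=\prod_{j=m+1}^n c_j$, with the empty product (when $n\le m$) equal to $1$. *)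

theory Defs
  imports Main
begin

text \<open>A sequence G = (g_1,...,g_k) of naturals is represented by g :: nat => nat,
  only the values at indices 1..k being relevant.\<close>

definition nsg :: "nat set \<Rightarrow> nat set" where
  "nsg A = {x. \<exists>f. x = (\<Sum>a\<in>A. f a * a)}"

definition dseq :: "(nat \<Rightarrow> nat) \<Rightarrow> nat \<Rightarrow> nat" where
  "dseq g i = Gcd (g ` {1..i})"

definition cseq :: "(nat \<Rightarrow> nat) \<Rightarrow> nat \<Rightarrow> nat" where
  "cseq g j = dseq g (j - 1) div dseq g j"

definition Cprod :: "(nat \<Rightarrow> nat) \<Rightarrow> nat \<Rightarrow> nat \<Rightarrow> nat" where
  "Cprod g m n = (\<Prod>j\<in>{m+1..n}. cseq g j)"

definition telescopic :: "(nat \<Rightarrow> nat) \<Rightarrow> nat \<Rightarrow> bool" where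
  "telescopic g k \<longleftrightarrow> (\<forall>j\<in>{2..k}. cseq g j * g j \<in> nsg (g ` {1..j-1}))"

end

theory Submission
  imports Defs
begin

text \<open>Since d_k = 1 we have C_{i,k} = d_i, so the witnesses are forced to be the reduced
  generators z_i = g_i / d_i. They are coprime to c_i = d_{i-1} / d_i because d_i = gcd g_i d_{i-1}.
  Finally c_i g_i = d_{i-1} z_i, and d_{i-1} divides g_1, ..., g_{i-1}; cancelling it turns
  c_i g_i \<in> \<langle>g_1, ..., g_{i-1}\<rangle> into z_i \<in> \<langle>g_j / d_{i-1} : j < i\<rangle>, where g_j / d_{i-1} = z_j C_{j,i-1}.\<close>

lemma nsg_mult_iff:
  assumes "finite B" "D > 0" "\<forall>a\<in>B. D dvd a"
  shows "D * z \<in> nsg B \<longleftrightarrow> z \<in> nsg ((\<lambda>a. a div D) ` B)"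
proof -
  have inj: "inj_on (\<lambda>a. a div D) B"
    by (rule inj_onI) (use assms in \<open>metis dvd_mult_div_cancel\<close>)
  have reindex: "(\<Sum>b\<in>(\<lambda>a. a div D) ` B. f b * b) = (\<Sum>a\<in>B. f (a div D) * (a div D))" for f
    by (simp add: sum.reindex[OF inj])
  have scale: "D * (\<Sum>a\<in>B. h a * (a div D)) = (\<Sum>a\<in>B. h a * a)" for h
    unfolding sum_distrib_left by (rule sum.cong) (use assms in \<open>auto elim!: dvdE\<close>)
  show ?thesis
  proof
    assume "D * z \<in> nsg B"
    then obtain f where f: "D * z = (\<Sum>a\<in>B. f a * a)" unfolding nsg_def by auto
    have "D * z = D * (\<Sum>a\<in>B. f (a div D * D) * (a div D))"
      unfolding scale f by (rule sum.cong) (use assms in \<open>auto elim!: dvdE\<close>)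
    then have "z = (\<Sum>a\<in>B. f (a div D * D) * (a div D))" using assms(2) by simp
    then show "z \<in> nsg ((\<lambda>a. a div D) ` B)"
      unfolding nsg_def mem_Collect_eq reindex by (intro exI[of _ "\<lambda>b. f (b * D)"]) simp
  next
    assume "z \<in> nsg ((\<lambda>a. a div D) ` B)"
    then obtain f where "z = (\<Sum>a\<in>B. f (a div D) * (a div D))" unfolding nsg_def reindex by auto
    then show "D * z \<in> nsg B"
      unfolding nsg_def mem_Collect_eq by (intro exI[of _ "\<lambda>a. f (a div D)"]) (simp add: scale)
  qed
qed

lemma dseq_Suc: "dseq g (Suc n) = gcd (g (Suc n)) (dseq g n)"
proof -
  have "{1..Suc n} = insert (Suc n) {1..n}" by auto
  then show ?thesis unfolding dseq_def by simp
qed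

lemma dseq_dvd: "1 \<le> j \<Longrightarrow> j \<le> n \<Longrightarrow> dseq g n dvd g j"
  unfolding dseq_def by (rule Gcd_dvd) auto

lemma dseq_antimono: "m \<le> n \<Longrightarrow> dseq g n dvd dseq g m"
  unfolding dseq_def by (rule Gcd_greatest) (auto intro: Gcd_dvd)

lemma dseq_pos: "g 1 > 0 \<Longrightarrow> 1 \<le> j \<Longrightarrow> dseq g j > 0"
  using dseq_dvd[of 1 j g] by (auto intro: Nat.gr0I)

lemma Cprod_eq_div:
  assumes "g 1 > 0" "1 \<le> m" "m \<le> n"
  shows "Cprod g m n = dseq g m div dseq g n"
  using assms(3)
proof (induction n rule: dec_induct)
  case base
  then show ?case using dseq_pos[of g, OF assms(1,2)] by (simp add: Cprod_def)
next
  case (step n)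
  have "{m+1..Suc n} = insert (Suc n) {m+1..n}" using step by auto
  then have "Cprod g m (Suc n) = (dseq g n div dseq g (Suc n)) * (dseq g m div dseq g n)"
    using step by (simp add: Cprod_def cseq_def)
  also have "\<dots> = dseq g m div dseq g (Suc n)"
  proof -
    obtain x where x: "dseq g n = dseq g (Suc n) * x" using dseq_antimono[of n "Suc n" g] by auto
    obtain y where y: "dseq g m = dseq g n * y" using dseq_antimono[OF step(1)] by auto
    have "dseq g n > 0" "dseq g (Suc n) > 0" using dseq_pos[of g, OF assms(1)] step(1) assms(2) by auto
    then show ?thesis by (simp add: x y)
  qed
  finally show ?case .
qed

definition reduced_gen :: "(nat \<Rightarrow> nat) \<Rightarrow> nat \<Rightarrow> nat" where
  "reduced_gen g j = g j div dseq g j"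

lemma reduced_gen_1: "g 1 > 0 \<Longrightarrow> reduced_gen g 1 = 1"
  by (simp add: reduced_gen_def dseq_def)

lemma reduced_gen_mult_Cprod:
  assumes "g 1 > 0" "1 \<le> j" "j \<le> n"
  shows "reduced_gen g j * Cprod g j n = g j div dseq g n"
proof -
  obtain x where x: "g j = dseq g j * x" using dseq_dvd[of j j g] assms(2) by auto
  obtain y where y: "dseq g j = dseq g n * y" using dseq_antimono[OF assms(3)] by auto
  have "dseq g j > 0" "dseq g n > 0" using dseq_pos[of g, OF assms(1)] assms(2,3) by auto
  then show ?thesis using Cprod_eq_div[of g, OF assms]
    by (simp add: reduced_gen_def x y)
qed

lemma g_eq_reduced_gen_mult_Cprod:
  assumes "g 1 > 0" "dseq g k = 1" "1 \<le> i" "i \<le> k"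
  shows "g i = reduced_gen g i * Cprod g i k"
  using reduced_gen_mult_Cprod[of g, OF assms(1,3,4)] assms(2) by simp

lemma reduced_gen_unique:
  assumes "g 1 > 0" "dseq g k = 1" "1 \<le> i" "i \<le> k" "g i = z * Cprod g i k"
  shows "z = reduced_gen g i"
  using assms Cprod_eq_div[of g, OF assms(1,3,4)] dseq_pos[of g, OF assms(1,3)]
  by (simp add: reduced_gen_def)

lemma witness_eq_reduced_gen:
  assumes "g 1 > 0" "dseq g k = 1" "z 1 = 1" "\<forall>i\<in>{2..k}. g i = z i * Cprod g i k"
    and "1 \<le> j" "j \<le> k"
  shows "z j = reduced_gen g j"
proof (cases "j = 1")
  case True
  then show ?thesis using assms(3) reduced_gen_1[of g, OF assms(1)] by simp
next
  case False
  then have "g j = z j * Cprod g j k" using assms(4-6) by auto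
  then show ?thesis by (rule reduced_gen_unique[of g, OF assms(1,2,5,6)])
qed

lemma coprime_reduced_gen_cseq:
  assumes "g 1 > 0" "2 \<le> i"
  shows "gcd (reduced_gen g i) (cseq g i) = 1"
proof -
  have d: "dseq g i = gcd (g i) (dseq g (i - 1))"
    using dseq_Suc[of g "i - 1"] assms(2) by (simp add: Suc_diff_Suc numeral_2_eq_2)
  have "coprime (g i div gcd (g i) (dseq g (i - 1))) (dseq g (i - 1) div gcd (g i) (dseq g (i - 1)))"
    by (rule div_gcd_coprime) (use dseq_pos[of g, OF assms(1), of "i - 1"] assms(2) in auto)
  then show ?thesis unfolding reduced_gen_def cseq_def d[symmetric] by simp
qed

lemma telescopic_step_iff:
  assumes "g 1 > 0" "2 \<le> i"
  shows "cseq g i * g i \<in> nsg (g ` {1..i-1}) \<longleftrightarrow>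
    reduced_gen g i \<in> nsg ((\<lambda>j. reduced_gen g j * Cprod g j (i - 1)) ` {1..<i})"
proof -
  let ?D = "dseq g (i - 1)"
  have "?D > 0" using dseq_pos[of g, OF assms(1)] assms(2) by simp
  have "cseq g i * g i = ?D * reduced_gen g i"
    using dseq_antimono[of "i - 1" i g] dseq_dvd[of i i g] dseq_pos[of g, OF assms(1), of i] assms(2)
    by (auto simp: cseq_def reduced_gen_def elim!: dvdE)
  moreover have "(\<lambda>j. reduced_gen g j * Cprod g j (i - 1)) ` {1..<i} = (\<lambda>a. a div ?D) ` g ` {1..i-1}"
    unfolding image_image using reduced_gen_mult_Cprod[of g, OF assms(1)] assms(2)
    by (intro image_cong) auto
  moreover have "?D * reduced_gen g i \<in> nsg (g ` {1..i-1}) \<longleftrightarrow>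
      reduced_gen g i \<in> nsg ((\<lambda>a. a div ?D) ` g ` {1..i-1})"
    by (rule nsg_mult_iff) (use \<open>?D > 0\<close> dseq_dvd in auto)
  ultimately show ?thesis by simp
qed

theorem mainTheorem8:
  fixes g :: "nat \<Rightarrow> nat" and k :: nat
  assumes "k \<ge> 1" and "g 1 > 0" and "dseq g k = 1"
  shows "telescopic g k \<longleftrightarrow>
    (\<exists>z :: nat \<Rightarrow> nat. z 1 = 1 \<and>
       (\<forall>i\<in>{2..k}. g i = z i * Cprod g i k \<and> gcd (z i) (cseq g i) = 1 \<and>
          z i \<in> nsg ((\<lambda>j. z j * Cprod g j (i - 1)) ` {1..<i})))"
    (is "_ \<longleftrightarrow> (\<exists>z. ?P z)")
proof
  assume telescopic: "telescopic g k"
  show "\<exists>z. ?P z"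
  proof (intro exI[of _ "reduced_gen g"] conjI ballI)
    show "reduced_gen g 1 = 1" using reduced_gen_1[of g, OF assms(2)] .
    fix i assume i: "i \<in> {2..k}"
    show "g i = reduced_gen g i * Cprod g i k"
      using i by (intro g_eq_reduced_gen_mult_Cprod[of g, OF assms(2,3)]) auto
    show "gcd (reduced_gen g i) (cseq g i) = 1"
      using i by (intro coprime_reduced_gen_cseq[of g, OF assms(2)]) auto
    show "reduced_gen g i \<in> nsg ((\<lambda>j. reduced_gen g j * Cprod g j (i - 1)) ` {1..<i})"
      using telescopic i telescopic_step_iff[of g, OF assms(2), of i] unfolding telescopic_def by auto
  qed
next
  assume "\<exists>z. ?P z"
  then obtain z where z_1: "z 1 = 1" and z_gen: "\<forall>i\<in>{2..k}. g i = z i * Cprod g i k \<and>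
      z i \<in> nsg ((\<lambda>j. z j * Cprod g j (i - 1)) ` {1..<i})"
    by blast
  have z_eq: "z j = reduced_gen g j" if "1 \<le> j" "j \<le> k" for j
    using witness_eq_reduced_gen[of g k z, OF assms(2,3) z_1] z_gen that by blast
  show "telescopic g k" unfolding telescopic_def
  proof
    fix i assume i: "i \<in> {2..k}"
    have "(\<lambda>j. z j * Cprod g j (i - 1)) ` {1..<i} = (\<lambda>j. reduced_gen g j * Cprod g j (i - 1)) ` {1..<i}"
      using z_eq i by (intro image_cong) auto
    moreover have "z i = reduced_gen g i" using z_eq i by auto
    ultimately have "reduced_gen g i \<in> nsg ((\<lambda>j. reduced_gen g j * Cprod g j (i - 1)) ` {1..<i})"
      using z_gen i by metis
    then show "cseq g i * g i \<in> nsg (g ` {1..i - 1})"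
      using telescopic_step_iff[of g, OF assms(2), of i] i by simp
  qed
qed

end
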